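(* In the setting of the context, if $\pi_\alpha\to0$ as $n\to\infty$, then $\widehat\pi_{uc}=n^{-1}\sum_{i=1}^n\delta_i\xrightarrow{\mathbb{P}}\pi_{uc}$.
   Context: For each $n$ we observe $(Y_i,X_i,\delta_i)$, $i=1,\dots,n$, with $T_i=X_i^\top\beta+\alpha_i+\xi_i$, $Y_i=\min(T_i,C_i)$, $\delta_i=\mathbb{1}\{T_i\le C_i\}$; $\{C_i,X_i,\xi_i\}_i$ are independent and identically distributed, with the distribution of $(X_i,\xi_i)$ (and of $C_i$) not depending on $n$, while the distribution of $\alpha_i$ may depend on $n$. $\pi_\alpha=\mathbb{P}(\alpha_i\neq0)$. With $\tilde T_i=T_i-\alpha_i$ and $\tilde\delta_i=\mathbb{1}\{\tilde T_i\le C_i\}$, $\pi_{uc}=\mathbb{P}(\tilde\delta_1=1)$. *)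

theory Defs
  imports "HOL-Probability.Probability"
begin

definition conv_in_prob :: "(nat \<Rightarrow> 'w measure) \<Rightarrow> (nat \<Rightarrow> 'w \<Rightarrow> real) \<Rightarrow> real \<Rightarrow> bool" where
  "conv_in_prob M Z c \<longleftrightarrow>
     (\<forall>e>0. (\<lambda>n. measure (M n) {w \<in> space (M n). \<bar>Z n w - c\<bar> > e}) \<longlonglongrightarrow> 0)"

definition surv_T :: "'a::euclidean_space \<Rightarrow> 'a \<Rightarrow> real \<Rightarrow> real \<Rightarrow> real" where
  "surv_T beta x a e = inner x beta + a + e"

definition cens_ind :: "'a::euclidean_space \<Rightarrow> 'a \<Rightarrow> real \<Rightarrow> real \<Rightarrow> real \<Rightarrow> real" where
  "cens_ind beta x a e c = (if surv_T beta x a e \<le> c then 1 else 0)"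

text \<open>pi_uc = P(tilde delta_1 = 1), tilde T = X^T beta + xi, computed from the
  common (n-independent) joint law D of (X_i, xi_i, C_i).\<close>
definition pi_uc :: "'a::euclidean_space \<Rightarrow> ('a \<times> real \<times> real) measure \<Rightarrow> real" where
  "pi_uc beta D = measure D {(x, e, c). inner x beta + e \<le> c}"

end

(* The indicators tilde-delta_i = 1{X_i' beta + xi_i <= C_i} of the model without outliers are
   i.i.d. Bernoulli(pi_uc), so by Hoeffding's inequality their mean concentrates at pi_uc.
   Since delta_i can differ from tilde-delta_i only when alpha_i <> 0, the two means differ by
   at most the fraction of nonzero alpha_i, whose expectation pi_alpha tends to 0; Markov's
   inequality makes this discrepancy negligible in probability. *)

theory Submission
  imports Defs "HOL-Real_Asymp.Real_Asymp"
begin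

lemma conv_in_prob_if_bounded:
  fixes M :: "nat \<Rightarrow> 'w measure" and Z :: "nat \<Rightarrow> 'w \<Rightarrow> real"
  assumes bound: "\<And>e n. e > 0 \<Longrightarrow> n \<ge> N \<Longrightarrow>
      measure (M n) {w \<in> space (M n). \<bar>Z n w - c\<bar> > e} \<le> b e n"
    and vanish: "\<And>e. e > 0 \<Longrightarrow> b e \<longlonglongrightarrow> 0"
  shows "conv_in_prob M Z c"
  unfolding conv_in_prob_def
proof (intro allI impI)
  fix e :: real assume "e > 0"
  then have "eventually (\<lambda>n. measure (M n) {w \<in> space (M n). \<bar>Z n w - c\<bar> > e} \<le> b e n) sequentially"
    using bound unfolding eventually_sequentially by blast
  with \<open>e > 0\<close> show "(\<lambda>n. measure (M n) {w \<in> space (M n). \<bar>Z n w - c\<bar> > e}) \<longlonglongrightarrow> 0"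
    by (intro tendsto_sandwich[OF _ _ tendsto_const vanish]) auto
qed

lemma contaminated_mean_deviation_cases:
  fixes y' y u :: "'i \<Rightarrow> real" and e p :: real
  assumes fin: "finite I" and nonempty: "I \<noteq> {}"
    and contaminated: "\<And>i. i \<in> I \<Longrightarrow> \<bar>y' i - y i\<bar> \<le> u i"
    and far: "e < \<bar>(\<Sum>i\<in>I. y' i) / card I - p\<bar>"
  shows "e * card I / 2 \<le> \<bar>(\<Sum>i\<in>I. y i) - card I * p\<bar> \<or> e * card I / 2 \<le> (\<Sum>i\<in>I. u i)"
proof -
  have n: "real (card I) > 0"
    using fin nonempty by (simp add: card_gt_0_iff)
  have "\<bar>(\<Sum>i\<in>I. y' i) - (\<Sum>i\<in>I. y i)\<bar> \<le> (\<Sum>i\<in>I. u i)"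
    unfolding sum_subtractf[symmetric]
    by (rule order_trans[OF sum_abs sum_mono]) (use contaminated in auto)
  moreover have "e * card I < \<bar>(\<Sum>i\<in>I. y' i) - card I * p\<bar>"
    using far n by (simp add: field_simps flip: abs_mult_pos)
  ultimately show ?thesis
    by linarith
qed

lemma (in prob_space) prob_sum_deviation_unit_interval_le:
  fixes Y :: "'i \<Rightarrow> 'a \<Rightarrow> real" and p a :: real
  assumes fin: "finite I" and nonempty: "I \<noteq> {}"
    and indep: "indep_vars (\<lambda>_. borel) Y I"
    and Y_range: "\<And>i w. i \<in> I \<Longrightarrow> w \<in> space M \<Longrightarrow> Y i w \<in> {0..1}"
    and Y_mean: "\<And>i. i \<in> I \<Longrightarrow> expectation (Y i) = p"
    and a: "a \<ge> 0"
  shows "prob {w \<in> space M. a \<le> \<bar>(\<Sum>i\<in>I. Y i w) - card I * p\<bar>} \<le> 2 * exp (- 2 * a\<^sup>2 / card I)"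
proof -
  interpret Hoeffding_ineq M I Y "\<lambda>_. 0" "\<lambda>_. 1" "\<Sum>i\<in>I. expectation (Y i)"
    by unfold_locales (use fin indep Y_range in auto)
  show ?thesis
    using Hoeffding_ineq_abs_ge[OF a] fin nonempty Y_mean by (simp add: card_gt_0_iff)
qed

lemma (in prob_space) prob_sum_ge_le:
  fixes A :: "'i \<Rightarrow> 'a \<Rightarrow> real" and q a :: real
  assumes fin: "finite I"
    and A_nonneg: "\<And>i w. i \<in> I \<Longrightarrow> w \<in> space M \<Longrightarrow> 0 \<le> A i w"
    and A_integrable: "\<And>i. i \<in> I \<Longrightarrow> integrable M (A i)"
    and A_mean: "\<And>i. i \<in> I \<Longrightarrow> expectation (A i) = q"
    and a: "a > 0"
  shows "prob {w \<in> space M. a \<le> (\<Sum>i\<in>I. A i w)} \<le> card I * q / a"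
proof -
  have "prob {w \<in> space M. a \<le> (\<Sum>i\<in>I. A i w)} \<le> expectation (\<lambda>w. \<Sum>i\<in>I. A i w) / a"
    using a A_integrable A_nonneg
    by (intro integral_Markov_inequality_measure[where A="space M"]) (auto intro!: sum_nonneg)
  also have "expectation (\<lambda>w. \<Sum>i\<in>I. A i w) = card I * q"
    using A_integrable A_mean by simp
  finally show ?thesis .
qed

lemma (in prob_space) prob_contaminated_mean_deviation_le:
  fixes Y Y' A :: "'i \<Rightarrow> 'a \<Rightarrow> real"
  assumes fin: "finite I" and nonempty: "I \<noteq> {}"
    and indep: "indep_vars (\<lambda>_. borel) Y I"
    and Y_range: "\<And>i w. i \<in> I \<Longrightarrow> w \<in> space M \<Longrightarrow> Y i w \<in> {0..1}"
    and Y_mean: "\<And>i. i \<in> I \<Longrightarrow> expectation (Y i) = p"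
    and contaminated: "\<And>i w. i \<in> I \<Longrightarrow> w \<in> space M \<Longrightarrow> \<bar>Y' i w - Y i w\<bar> \<le> A i w"
    and A_integrable: "\<And>i. i \<in> I \<Longrightarrow> integrable M (A i)"
    and A_mean: "\<And>i. i \<in> I \<Longrightarrow> expectation (A i) = q"
    and e: "e > 0"
  shows "prob {w \<in> space M. e < \<bar>(\<Sum>i\<in>I. Y' i w) / card I - p\<bar>}
           \<le> 2 * exp (- (e\<^sup>2 * card I / 2)) + 2 * q / e"
proof -
  define n where "n = real (card I)"
  define a where "a = e * n / 2"
  have n: "n > 0" using fin nonempty by (simp add: n_def card_gt_0_iff)
  have a: "a > 0" using e n by (simp add: a_def)
  have [measurable]: "i \<in> I \<Longrightarrow> random_variable borel (Y i)" for i
    using indep by (auto simp: indep_vars_def)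
  have [measurable]: "i \<in> I \<Longrightarrow> A i \<in> borel_measurable M" for i
    using A_integrable by auto
  have A_nonneg: "i \<in> I \<Longrightarrow> w \<in> space M \<Longrightarrow> 0 \<le> A i w" for i w
    using contaminated[of i w] by linarith
  have "{w \<in> space M. e < \<bar>(\<Sum>i\<in>I. Y' i w) / card I - p\<bar>}
      \<subseteq> {w \<in> space M. a \<le> \<bar>(\<Sum>i\<in>I. Y i w) - n * p\<bar>} \<union> {w \<in> space M. a \<le> (\<Sum>i\<in>I. A i w)}"
  proof safe
    fix w assume "w \<in> space M" "e < \<bar>(\<Sum>i\<in>I. Y' i w) / card I - p\<bar>"
      and "\<not> a \<le> (\<Sum>i\<in>I. A i w)"
    then show "a \<le> \<bar>(\<Sum>i\<in>I. Y i w) - n * p\<bar>"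
      using contaminated_mean_deviation_cases[OF fin nonempty,
          of "\<lambda>i. Y' i w" "\<lambda>i. Y i w" "\<lambda>i. A i w" e p] contaminated
      by (auto simp: a_def n_def)
  qed
  then have "prob {w \<in> space M. e < \<bar>(\<Sum>i\<in>I. Y' i w) / card I - p\<bar>}
      \<le> prob {w \<in> space M. a \<le> \<bar>(\<Sum>i\<in>I. Y i w) - n * p\<bar>}
        + prob {w \<in> space M. a \<le> (\<Sum>i\<in>I. A i w)}"
    by (intro order_trans[OF finite_measure_mono measure_Un_le]) auto
  also have "\<dots> \<le> 2 * exp (- 2 * a\<^sup>2 / n) + n * q / a"
    unfolding n_def
    by (intro add_mono prob_sum_deviation_unit_interval_le prob_sum_ge_le)
      (use a fin nonempty indep Y_range Y_mean A_nonneg A_integrable A_mean in auto)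
  also have "\<dots> = 2 * exp (- (e\<^sup>2 * card I / 2)) + 2 * q / e"
    using n e by (simp add: a_def n_def power2_eq_square field_simps)
  finally show ?thesis .
qed

definition uncensored_region :: "'a::euclidean_space \<Rightarrow> ('a \<times> real \<times> real) set" where
  "uncensored_region beta = {(x, e, c). inner x beta + e \<le> c}"

lemma uncensored_region_borel [measurable]: "uncensored_region beta \<in> sets borel"
proof -
  have "uncensored_region beta = {z. inner (fst z) beta + fst (snd z) \<le> snd (snd z)}"
    by (auto simp: uncensored_region_def)
  then show ?thesis
    by (simp only:) (intro borel_closed closed_Collect_le continuous_intros)
qed

lemma pi_uc_eq_measure_uncensored_region: "pi_uc beta D = measure D (uncensored_region beta)"
  by (simp add: pi_uc_def uncensored_region_def)

lemma abs_cens_ind_diff_le: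
  "\<bar>cens_ind beta x a e c - indicator (uncensored_region beta) (x, e, c)\<bar>
    \<le> indicator {a. a \<noteq> 0} a"
  by (simp add: cens_ind_def surv_T_def uncensored_region_def indicator_def)

lemma (in prob_space) expectation_indicator_distr:
  assumes [measurable]: "V \<in> measurable M N" "R \<in> sets N"
  shows "expectation (\<lambda>w. indicator R (V w) :: real) = measure (distr M N V) R"
proof -
  have "expectation (\<lambda>w. indicator R (V w) :: real) = expectation (indicator (V -` R \<inter> space M))"
    by (intro Bochner_Integration.integral_cong) (auto split: split_indicator)
  then show ?thesis
    by (simp add: measure_distr measurable_sets)
qed

lemma (in prob_space) prob_censoring_rate_deviation_le:
  fixes X :: "nat \<Rightarrow> 'a \<Rightarrow> 'b::euclidean_space" and xi alpha C :: "nat \<Rightarrow> 'a \<Rightarrow> real"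
  assumes [measurable]: "\<And>i. X i \<in> borel_measurable M" "\<And>i. xi i \<in> borel_measurable M"
      "\<And>i. alpha i \<in> borel_measurable M" "\<And>i. C i \<in> borel_measurable M"
    and indep: "indep_vars (\<lambda>_. borel) (\<lambda>i w. (X i w, xi i w, C i w)) {1..n}"
    and ident: "\<And>i. i \<in> {1..n} \<Longrightarrow> distr M borel (\<lambda>w. (X i w, xi i w, C i w)) = D"
    and ident_alpha: "\<And>i. i \<in> {1..n} \<Longrightarrow> distr M borel (alpha i) = distr M borel (alpha 1)"
    and n: "n \<ge> 1" and e: "e > 0"
  shows "prob {w \<in> space M.
             e < \<bar>(\<Sum>i=1..n. cens_ind beta (X i w) (alpha i w) (xi i w) (C i w)) / real n - pi_uc beta D\<bar>}
         \<le> 2 * exp (- (e\<^sup>2 * real n / 2)) + 2 * prob {w \<in> space M. alpha 1 w \<noteq> 0} / e"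
proof -
  have [measurable]: "{x :: real. x \<noteq> 0} \<in> sets borel"
    by (intro borel_open open_Collect_neq continuous_intros)
  have indep_uncontaminated: "indep_vars (\<lambda>_. borel)
      (\<lambda>i w. indicator (uncensored_region beta) (X i w, xi i w, C i w)) {1..n}"
    by (rule indep_vars_compose2[OF indep]) measurable
  have mean_uncontaminated: "expectation
      (\<lambda>w. indicator (uncensored_region beta) (X i w, xi i w, C i w)) = pi_uc beta D"
    if "i \<in> {1..n}" for i
    using expectation_indicator_distr[of "\<lambda>w. (X i w, xi i w, C i w)" borel] ident[OF that]
    by (simp add: pi_uc_eq_measure_uncensored_region)
  have integrable_outlier_indicator: "integrable M (\<lambda>w. indicator {x. x \<noteq> 0} (alpha i w) :: real)" for i
    by (rule integrable_const_bound[where B=1]) (auto split: split_indicator)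
  have mean_outlier_indicator: "expectation (\<lambda>w. indicator {x. x \<noteq> 0} (alpha i w))
      = prob {w \<in> space M. alpha 1 w \<noteq> 0}" if "i \<in> {1..n}" for i
  proof -
    have "expectation (\<lambda>w. indicator {x. x \<noteq> 0} (alpha i w))
        = measure (distr M borel (alpha 1)) {x. x \<noteq> 0}"
      using expectation_indicator_distr[of "alpha i" borel] ident_alpha[OF that] by simp
    also have "\<dots> = prob {w \<in> space M. alpha 1 w \<noteq> 0}"
      by (simp add: measure_distr vimage_def Int_def conj_commute)
    finally show ?thesis .
  qed
  have "prob {w \<in> space M.
      e < \<bar>(\<Sum>i\<in>{1..n}. cens_ind beta (X i w) (alpha i w) (xi i w) (C i w)) / card {1..n}
        - pi_uc beta D\<bar>}
    \<le> 2 * exp (- (e\<^sup>2 * card {1..n} / 2)) + 2 * prob {w \<in> space M. alpha 1 w \<noteq> 0} / e"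
    by (rule prob_contaminated_mean_deviation_le[OF _ _ indep_uncontaminated _ mean_uncontaminated
          abs_cens_ind_diff_le integrable_outlier_indicator mean_outlier_indicator e])
      (use n in \<open>auto split: split_indicator\<close>)
  then show ?thesis
    by simp
qed

theorem lemma2:
  fixes M :: "nat \<Rightarrow> 'w measure"
    and X :: "nat \<Rightarrow> nat \<Rightarrow> 'w \<Rightarrow> 'a::euclidean_space"
    and xi alpha C :: "nat \<Rightarrow> nat \<Rightarrow> 'w \<Rightarrow> real"
    and beta :: 'a
    and D :: "('a \<times> real \<times> real) measure"
  assumes prob: "\<And>n. prob_space (M n)"
    and meas_X: "\<And>n i. X n i \<in> borel_measurable (M n)"
    and meas_xi: "\<And>n i. xi n i \<in> borel_measurable (M n)"
    and meas_alpha: "\<And>n i. alpha n i \<in> borel_measurable (M n)"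
    and meas_C: "\<And>n i. C n i \<in> borel_measurable (M n)"
    and indep: "\<And>n. prob_space.indep_vars (M n) (\<lambda>_. borel)
                    (\<lambda>i w. (X n i w, xi n i w, C n i w)) {1..n}"
    and ident: "\<And>n i. i \<in> {1..n} \<Longrightarrow>
                    distr (M n) borel (\<lambda>w. (X n i w, xi n i w, C n i w)) = D"
    and ident_alpha: "\<And>n i. i \<in> {1..n} \<Longrightarrow>
                    distr (M n) borel (alpha n i) = distr (M n) borel (alpha n 1)"
    and pi_alpha_0: "(\<lambda>n. measure (M n) {w \<in> space (M n). alpha n 1 w \<noteq> 0}) \<longlonglongrightarrow> 0"
  shows "conv_in_prob M
           (\<lambda>n w. (\<Sum>i=1..n. cens_ind beta (X n i w) (alpha n i w) (xi n i w) (C n i w)) / real n)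
           (pi_uc beta D)"
proof (rule conv_in_prob_if_bounded[where N=1 and b="\<lambda>e n. 2 * exp (- (e\<^sup>2 * real n / 2))
    + 2 * measure (M n) {w \<in> space (M n). alpha n 1 w \<noteq> 0} / e"], goal_cases)
  case (1 e n)
  then show ?case
    by (intro prob_space.prob_censoring_rate_deviation_le[where M="M n" and X="X n" and xi="xi n"
          and alpha="alpha n" and C="C n", OF prob meas_X meas_xi meas_alpha meas_C indep ident
          ident_alpha])
next
  case (2 e)
  have "(\<lambda>n. 2 * exp (- (e\<^sup>2 * real n / 2))) \<longlonglongrightarrow> 0"
    using \<open>e > 0\<close> by real_asymp
  moreover have "(\<lambda>n. 2 * measure (M n) {w \<in> space (M n). alpha n 1 w \<noteq> 0} / e) \<longlonglongrightarrow> 0"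
    using tendsto_mult_left[OF pi_alpha_0, of "2 / e"] by simp
  ultimately show ?case
    using tendsto_add by fastforce
qed

end
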